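(* Let $(\Omega,\mathcal{F},(\mathcal{F}_t)_{t\in[0,T]})$ be a filtered space with a probability measure $Q$, let $\rho:[0,T]\to\mathbb{R}$ be a deterministic interest rate, and let $S_t^0=\exp\left(\int_0^t\rho(u)\,du\right)$ be the bond. Let $S_t^1>0$ be an asset whose discounted price $X_t^1=S_t^1/S_t^0$ is a strictly positive $Q$-martingale. For $t\in[0,T]$ let $Q_1'(t)$ be the probability measure with $Q_1'(t)\ll Q$ and $\frac{dQ_1'(t)}{dQ}=\frac{X_T^1}{X_t^1}$. For a strike $K>0$, put $c_t=K\exp\left(-\int_t^T\rho(u)\,du\right)$ and, for $x>0$, let $$\Phi_t\left(\tfrac{dQ_1'(t)}{dQ},x\right)=\mathbf{1}\left\{\tfrac{dQ_1'(t)}{dQ}>\tfrac{c_t}{x}\right\},$$ and let the $Q$-price at time $t$ of the European call $H_C$ with strike $K$, given $S_t^1=x$, be $$p_Q(H_C,x,t)=x\,E_{Q_1'(t)}\left(\Phi_t\left(\tfrac{dQ_1'(t)}{dQ},x\right)\right)-\exp\left(-\int_t^T\rho(u)\,du\right)K\,E_Q\left(\Phi_t\left(\tfrac{dQ_1'(t)}{dQ},x\right)\right).$$ Suppose that for all $t$ the distribution $\mathcal{L}\left(\frac{dQ_1'(t)}{dQ}\,\Big|\,Q\right)$ has a continuous Lebesgue density on $(0,\infty)$. Then for every $s_t^1>0$, $$\frac{d}{dx}p_Q(H_C,x,t)\Big|_{x=s_t^1}=E_{Q_1'(t)}\left(\Phi_t\left(\tfrac{dQ_1'(t)}{dQ},s_t^1\right)\right),$$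 i.e. the ``delta'' of the price process equals the $Q_1'(t)$-power of the test $\Phi_t$.
   Context: The displayed formula for $p_Q(H_C,x,t)$ is the representation of the $Q$-price process of the European call $H_C$ (payoff $(S_T^1-K)^+$) at time $t$ given $S_t^1=x$; $\Phi_t$ is viewed as a statistical (Neyman–Pearson) test of the null hypothesis $\{Q\}$ against the alternative $\{Q_1'(t)\}$, and $E_{Q_1'(t)}(\Phi_t)$ is its power. *)

theory Defs
  imports "HOL-Probability.Probability"
begin

definition martingale_on :: "'a measure \<Rightarrow> (real \<Rightarrow> 'a measure) \<Rightarrow> real \<Rightarrow> (real \<Rightarrow> 'a \<Rightarrow> real) \<Rightarrow> bool" where
  "martingale_on M F T X \<longleftrightarrow>
     (\<forall>t\<in>{0..T}. subalgebra M (F t) \<and> X t \<in> borel_measurable (F t) \<and> integrable M (X t)) \<and>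
     (\<forall>s t. 0 \<le> s \<longrightarrow> s \<le> t \<longrightarrow> t \<le> T \<longrightarrow>
        (AE \<omega> in M. real_cond_exp M (F s) (X t) \<omega> = X s \<omega>))"

definition bond :: "(real \<Rightarrow> real) \<Rightarrow> real \<Rightarrow> real" where
  "bond \<rho> t = exp (integral {0..t} \<rho>)"

definition discounted :: "(real \<Rightarrow> real) \<Rightarrow> (real \<Rightarrow> 'a \<Rightarrow> real) \<Rightarrow> real \<Rightarrow> 'a \<Rightarrow> real" where
  "discounted \<rho> S1 t \<omega> = S1 t \<omega> / bond \<rho> t"

definition dens_Q1' :: "(real \<Rightarrow> real) \<Rightarrow> (real \<Rightarrow> 'a \<Rightarrow> real) \<Rightarrow> real \<Rightarrow> real \<Rightarrow> 'a \<Rightarrow> real" where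
  "dens_Q1' \<rho> S1 T t \<omega> = discounted \<rho> S1 T \<omega> / discounted \<rho> S1 t \<omega>"

definition Q1' :: "'a measure \<Rightarrow> (real \<Rightarrow> real) \<Rightarrow> (real \<Rightarrow> 'a \<Rightarrow> real) \<Rightarrow> real \<Rightarrow> real \<Rightarrow> 'a measure" where
  "Q1' Q \<rho> S1 T t = density Q (\<lambda>\<omega>. ennreal (dens_Q1' \<rho> S1 T t \<omega>))"

definition c_strike :: "(real \<Rightarrow> real) \<Rightarrow> real \<Rightarrow> real \<Rightarrow> real \<Rightarrow> real" where
  "c_strike \<rho> K T t = K * exp (- integral {t..T} \<rho>)"

definition Phi :: "(real \<Rightarrow> real) \<Rightarrow> real \<Rightarrow> real \<Rightarrow> real \<Rightarrow> real \<Rightarrow> real \<Rightarrow> real" where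
  "Phi \<rho> K T t L x = (if L > c_strike \<rho> K T t / x then 1 else 0)"

definition price_call :: "'a measure \<Rightarrow> (real \<Rightarrow> real) \<Rightarrow> (real \<Rightarrow> 'a \<Rightarrow> real) \<Rightarrow> real \<Rightarrow> real \<Rightarrow> real \<Rightarrow> real \<Rightarrow> real" where
  "price_call Q \<rho> S1 K T t x =
     x * (\<integral>\<omega>. Phi \<rho> K T t (dens_Q1' \<rho> S1 T t \<omega>) x \<partial>(Q1' Q \<rho> S1 T t))
     - exp (- integral {t..T} \<rho>) * K * (\<integral>\<omega>. Phi \<rho> K T t (dens_Q1' \<rho> S1 T t \<omega>) x \<partial>Q)"

end

theory Submission
  imports Defs
begin

text \<open>Under \<open>Q\<close> the likelihood ratio \<open>L = dQ\<^sub>1'(t)/dQ\<close> has a density \<open>f\<close>, and the test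
  rejects iff \<open>L > c\<^sub>t/x\<close>. Hence \<open>E\<^bsub>Q\<^sub>1'(t)\<^esub>(\<Phi>\<^sub>t) = G (c\<^sub>t/x)\<close> and
  \<open>E\<^sub>Q(\<Phi>\<^sub>t) = P (c\<^sub>t/x)\<close> with the upper tail integrals \<open>G a = \<integral>\<^sub>a\<^sup>\<infinity> y f(y) dy\<close> and
  \<open>P a = \<integral>\<^sub>a\<^sup>\<infinity> f(y) dy\<close>, so the price is \<open>x G(c\<^sub>t/x) - c\<^sub>t P(c\<^sub>t/x)\<close>. By continuity of \<open>f\<close>,
  \<open>G' a = -a f a\<close> and \<open>P' a = -f a\<close>; at \<open>a = c\<^sub>t/x\<close> the two chain-rule terms cancel and only
  \<open>G(c\<^sub>t/x)\<close> survives. That \<open>G\<close> is finite, i.e. \<open>L\<close> is integrable, follows from the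
  martingale property of the discounted price, which gives \<open>E\<^sub>Q L = 1\<close>.\<close>

lemma has_real_derivative_set_integral_Ioi:
  fixes h :: "real \<Rightarrow> real"
  assumes h: "integrable lborel h" and cont: "continuous_on U h" and "open U" and "a0 \<in> U"
  shows "((\<lambda>a. LINT y:{a<..}|lborel. h y) has_real_derivative - h a0) (at a0)"
proof -
  obtain e where e: "e > 0" "cball a0 e \<subseteq> U"
    using \<open>open U\<close> \<open>a0 \<in> U\<close> open_contains_cball by blast
  define \<alpha> \<beta> where "\<alpha> = a0 - e" and "\<beta> = a0 + e"
  have ab: "\<alpha> < a0" "a0 < \<beta>" using e by (auto simp: \<alpha>_def \<beta>_def)
  have "{\<alpha>..\<beta>} \<subseteq> U" using e by (auto simp: \<alpha>_def \<beta>_def cball_def dist_real_def subset_eq)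
  then have cont_ab: "continuous_on {\<alpha>..\<beta>} h" using continuous_on_subset[OF cont] by blast
  have set_int: "set_integrable lborel A h" if "A \<in> sets lborel" for A
    unfolding set_integrable_def by (rule integrable_mult_indicator[OF that h])
  have split: "(LINT y:{a<..}|lborel. h y) = integral {a..\<beta>} h + (LINT y:{\<beta>..}|lborel. h y)"
    if "a < \<beta>" for a
  proof -
    have "{a<..} = {a<..<\<beta>} \<union> {\<beta>..}" using that by auto
    then have "(LINT y:{a<..}|lborel. h y) = (LINT y:{a<..<\<beta>}|lborel. h y) + (LINT y:{\<beta>..}|lborel. h y)"
      using set_integral_Un[of "{a<..<\<beta>}" "{\<beta>..}" lborel h] set_int by fastforce
    also have "(LINT y:{a<..<\<beta>}|lborel. h y) = integral {a..\<beta>} h"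
      by (simp add: set_borel_integral_eq_integral(2) set_int integral_open_interval_real)
    finally show ?thesis .
  qed
  have "((\<lambda>a. integral {a..\<beta>} h + (LINT y:{\<beta>..}|lborel. h y)) has_real_derivative - h a0) (at a0 within {\<alpha>..\<beta>})"
    using integral_has_real_derivative'[OF cont_ab, of a0] ab by (auto intro!: derivative_eq_intros)
  then have "((\<lambda>a. integral {a..\<beta>} h + (LINT y:{\<beta>..}|lborel. h y)) has_real_derivative - h a0) (at a0)"
    using at_within_Icc_at[of \<alpha> a0 \<beta>] ab by simp
  then show ?thesis
    by (rule has_field_derivative_transform_within_open[of _ _ _ "{..<\<beta>}"]) (use ab split in auto)
qed

lemma integral_distributed_upper_tail:
  fixes f g :: "real \<Rightarrow> real"
  assumes D: "distributed M lborel X (\<lambda>y. ennreal (f y))" and f: "\<forall>y. 0 \<le> f y"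
    and g[measurable]: "g \<in> borel_measurable borel"
  shows "(\<integral>\<omega>. g (X \<omega>) * (if X \<omega> > a then 1 else 0) \<partial>M) = (LINT y:{a<..}|lborel. f y * g y)"
proof -
  have "(\<integral>\<omega>. g (X \<omega>) * (if X \<omega> > a then 1 else 0) \<partial>M)
      = (\<integral>y. f y * (g y * (if y > a then 1 else 0)) \<partial>lborel)"
    by (rule distributed_integral[OF D, symmetric]) (use f in auto)
  then show ?thesis
    by (simp add: set_lebesgue_integral_def indicator_def of_bool_def ac_simps)
qed

lemma martingale_on_borel_measurable:
  assumes "martingale_on Q F T X" and "t \<in> {0..T}"
  shows "X t \<in> borel_measurable Q"
  using assms measurable_from_subalg unfolding martingale_on_def by blast

lemma nn_cond_exp_positive_martingale:
  fixes X :: "real \<Rightarrow> 'a \<Rightarrow> real"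
  assumes Q: "prob_space Q" and mart: "martingale_on Q F T X"
    and st: "0 \<le> s" "s \<le> t" "t \<le> T"
    and Xt: "\<forall>\<omega>\<in>space Q. 0 \<le> X t \<omega>" and Xs: "\<forall>\<omega>\<in>space Q. 0 < X s \<omega>"
  shows "AE \<omega> in Q. nn_cond_exp Q (F s) (\<lambda>\<omega>. ennreal (X t \<omega>)) \<omega> = ennreal (X s \<omega>)"
proof -
  \<comment> \<open>\<open>real_cond_exp\<close> is a difference of \<open>enn2real\<close>s of the conditional expectations of the
      positive and negative parts: \<open>X t \<ge> 0\<close> kills the negative part, and \<open>X s > 0\<close> rules out
      the value \<open>\<infinity>\<close>, which \<open>enn2real\<close> would send to \<open>0\<close>.\<close>
  interpret prob_space Q by (rule Q)
  have "subalgebra Q (F s)" using mart st unfolding martingale_on_def by auto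
  then interpret finite_measure_subalgebra Q "F s" by unfold_locales
  have [measurable]: "X t \<in> borel_measurable Q"
    using martingale_on_borel_measurable[OF mart] st by simp
  have ce: "AE \<omega> in Q. real_cond_exp Q (F s) (X t) \<omega> = X s \<omega>"
    using mart st unfolding martingale_on_def by auto
  have "AE \<omega> in Q. nn_cond_exp Q (F s) (\<lambda>\<omega>. ennreal (- X t \<omega>)) \<omega> = nn_cond_exp Q (F s) (\<lambda>\<omega>. 0) \<omega>"
    by (rule nn_cond_exp_cong) (use Xt in \<open>auto intro!: AE_I2 ennreal_neg\<close>)
  moreover have "AE \<omega> in Q. 0 = nn_cond_exp Q (F s) (\<lambda>\<omega>. 0) \<omega>"
    by (rule nn_cond_exp_F_meas) auto
  ultimately show ?thesis
    using ce AE_space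
  proof eventually_elim
    case (elim \<omega>)
    then have "enn2real (nn_cond_exp Q (F s) (\<lambda>\<omega>. ennreal (X t \<omega>)) \<omega>) = X s \<omega>"
      by (simp add: real_cond_exp_def)
    moreover have "X s \<omega> > 0" using Xs elim by auto
    ultimately show ?case
      by (cases "nn_cond_exp Q (F s) (\<lambda>\<omega>. ennreal (X t \<omega>)) \<omega>" rule: ennreal_cases) auto
  qed
qed

lemma nn_integral_positive_martingale_ratio:
  fixes X :: "real \<Rightarrow> 'a \<Rightarrow> real"
  assumes Q: "prob_space Q" and mart: "martingale_on Q F T X"
    and st: "0 \<le> s" "s \<le> t" "t \<le> T"
    and Xt: "\<forall>\<omega>\<in>space Q. 0 \<le> X t \<omega>" and Xs: "\<forall>\<omega>\<in>space Q. 0 < X s \<omega>"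
  shows "(\<integral>\<^sup>+\<omega>. ennreal (X t \<omega> / X s \<omega>) \<partial>Q) = 1"
proof -
  interpret prob_space Q by (rule Q)
  have "subalgebra Q (F s)" and [measurable]: "X s \<in> borel_measurable (F s)"
    using mart st unfolding martingale_on_def by auto
  then interpret finite_measure_subalgebra Q "F s" by unfold_locales
  have [measurable]: "X t \<in> borel_measurable Q"
    using martingale_on_borel_measurable[OF mart] st by simp
  have "(\<integral>\<^sup>+\<omega>. ennreal (X t \<omega> / X s \<omega>) \<partial>Q) = (\<integral>\<^sup>+\<omega>. ennreal (1 / X s \<omega>) * ennreal (X t \<omega>) \<partial>Q)"
    by (rule nn_integral_cong)
       (use Xt Xs in \<open>auto simp del: ennreal_1 simp: ennreal_mult[symmetric] less_imp_le\<close>)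
  also have "\<dots> = (\<integral>\<^sup>+\<omega>. ennreal (1 / X s \<omega>) * nn_cond_exp Q (F s) (\<lambda>\<omega>. ennreal (X t \<omega>)) \<omega> \<partial>Q)"
    by (rule nn_cond_exp_intg[symmetric]) auto
  also have "\<dots> = (\<integral>\<^sup>+\<omega>. ennreal (1 / X s \<omega>) * ennreal (X s \<omega>) \<partial>Q)"
    by (rule nn_integral_cong_AE)
       (use nn_cond_exp_positive_martingale[OF Q mart st Xt Xs] in auto)
  also have "\<dots> = (\<integral>\<^sup>+\<omega>. 1 \<partial>Q)"
    by (rule nn_integral_cong)
       (use Xs in \<open>force simp del: ennreal_1 simp: ennreal_mult[symmetric] less_imp_le\<close>)
  finally show ?thesis by (simp add: emeasure_space_1)
qed

lemma has_real_derivative_call_price_shape: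
  fixes G P :: "real \<Rightarrow> real"
  assumes G: "(G has_real_derivative - (c / s * p)) (at (c / s))"
    and P: "(P has_real_derivative - p) (at (c / s))" and "s \<noteq> 0"
  shows "((\<lambda>x. x * G (c / x) - c * P (c / x)) has_real_derivative G (c / s)) (at s)"
proof -
  \<comment> \<open>Since \<open>G' = (c/s) P'\<close> at \<open>c/s\<close>, the chain-rule terms of both summands cancel.\<close>
  have q: "((\<lambda>x. c / x) has_real_derivative - c / s\<^sup>2) (at s)"
    using \<open>s \<noteq> 0\<close> by (auto intro!: derivative_eq_intros simp: power2_eq_square)
  have "((\<lambda>x. x * G (c / x) - c * P (c / x)) has_real_derivative
        s * (- (c / s * p) * (- c / s\<^sup>2)) + 1 * G (c / s) - c * (- p * (- c / s\<^sup>2))) (at s)"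
    by (intro DERIV_diff DERIV_mult' DERIV_ident DERIV_cmult DERIV_chain2[OF G q] DERIV_chain2[OF P q])
  moreover have "s * (- (c / s * p) * (- c / s\<^sup>2)) + 1 * G (c / s) - c * (- p * (- c / s\<^sup>2)) = G (c / s)"
    using \<open>s \<noteq> 0\<close> by (simp add: field_simps power2_eq_square)
  ultimately show ?thesis by simp
qed

lemma integral_Q1'_Phi:
  assumes D: "distributed Q lborel (dens_Q1' \<rho> S1 T t) (\<lambda>y. ennreal (f y))" and f: "\<forall>y. 0 \<le> f y"
    and pos: "\<forall>\<omega>\<in>space Q. 0 < dens_Q1' \<rho> S1 T t \<omega>"
  shows "(\<integral>\<omega>. Phi \<rho> K T t (dens_Q1' \<rho> S1 T t \<omega>) x \<partial>Q1' Q \<rho> S1 T t)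
       = (LINT y:{c_strike \<rho> K T t / x<..}|lborel. f y * y)"
proof -
  let ?L = "dens_Q1' \<rho> S1 T t"
  have [measurable]: "?L \<in> borel_measurable Q" using distributed_measurable[OF D] by simp
  have "(\<integral>\<omega>. Phi \<rho> K T t (?L \<omega>) x \<partial>Q1' Q \<rho> S1 T t) = (\<integral>\<omega>. ?L \<omega> *\<^sub>R Phi \<rho> K T t (?L \<omega>) x \<partial>Q)"
    unfolding Q1'_def Phi_def by (rule integral_density) (use pos in \<open>auto intro!: AE_I2 less_imp_le\<close>)
  also have "\<dots> = (LINT y:{c_strike \<rho> K T t / x<..}|lborel. f y * y)"
    using integral_distributed_upper_tail[OF D f, of "\<lambda>y. y"] by (simp add: Phi_def)
  finally show ?thesis .
qed

lemma price_call_eq_upper_tails: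
  assumes D: "distributed Q lborel (dens_Q1' \<rho> S1 T t) (\<lambda>y. ennreal (f y))" and f: "\<forall>y. 0 \<le> f y"
    and pos: "\<forall>\<omega>\<in>space Q. 0 < dens_Q1' \<rho> S1 T t \<omega>"
  shows "price_call Q \<rho> S1 K T t x
       = x * (LINT y:{c_strike \<rho> K T t / x<..}|lborel. f y * y)
         - c_strike \<rho> K T t * (LINT y:{c_strike \<rho> K T t / x<..}|lborel. f y)"
  using integral_Q1'_Phi[OF D f pos] integral_distributed_upper_tail[OF D f, of "\<lambda>_. 1"]
  by (simp add: price_call_def c_strike_def Phi_def mult.commute)

theorem theorem1:
  fixes Q :: "'a measure" and F :: "real \<Rightarrow> 'a measure"
    and \<rho> :: "real \<Rightarrow> real" and S1 :: "real \<Rightarrow> 'a \<Rightarrow> real"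
    and T K t s :: real
  assumes Q: "prob_space Q"
    and filt: "filtration (space Q) F"
    and T: "0 \<le> T"
    and rho: "\<rho> integrable_on {0..T}"
    and S1_pos: "\<forall>u\<in>{0..T}. \<forall>\<omega>\<in>space Q. S1 u \<omega> > 0"
    and mart: "martingale_on Q F T (discounted \<rho> S1)"
    and K: "K > 0"
    and t: "t \<in> {0..T}"
    and dens: "\<exists>f :: real \<Rightarrow> real. (\<forall>y. 0 \<le> f y) \<and> (\<forall>y \<le> 0. f y = 0) \<and>
                  continuous_on {0<..} f \<and>
                  distributed Q lborel (dens_Q1' \<rho> S1 T t) (\<lambda>y. ennreal (f y))"
    and s: "s > 0"
  shows "((\<lambda>x. price_call Q \<rho> S1 K T t x) has_real_derivative
           (\<integral>\<omega>. Phi \<rho> K T t (dens_Q1' \<rho> S1 T t \<omega>) s \<partial>(Q1' Q \<rho> S1 T t))) (at s)"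
proof -
  interpret prob_space Q by (rule Q)
  obtain f :: "real \<Rightarrow> real" where f: "\<forall>y. 0 \<le> f y" and f_cont: "continuous_on {0<..} f"
    and D: "distributed Q lborel (dens_Q1' \<rho> S1 T t) (\<lambda>y. ennreal (f y))"
    using dens by blast
  define c where "c = c_strike \<rho> K T t"
  have X_pos: "\<forall>u\<in>{0..T}. \<forall>\<omega>\<in>space Q. 0 < discounted \<rho> S1 u \<omega>"
    using S1_pos by (simp add: discounted_def bond_def)
  then have pos: "\<forall>\<omega>\<in>space Q. 0 < dens_Q1' \<rho> S1 T t \<omega>"
    using t by (simp add: dens_Q1'_def)
  have "integrable Q (dens_Q1' \<rho> S1 T t)"
    using nn_integral_positive_martingale_ratio[OF Q mart _ _ order_refl] X_pos t distributed_measurable[OF D]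
    by (intro integrableI_nonneg) (auto simp: dens_Q1'_def less_imp_le intro!: AE_I2)
  then have fy_int: "integrable lborel (\<lambda>y. f y * y)"
    using distributed_integrable[OF D, of "\<lambda>y. y"] f by simp
  have f_int: "integrable lborel f"
    using distributed_integrable[OF D, of "\<lambda>y. 1"] f by simp
  have fy_cont: "continuous_on {0<..} (\<lambda>y. f y * y)"
    using f_cont by (intro continuous_intros)
  have a: "c / s \<in> {0<..}" using K s by (simp add: c_def c_strike_def)
  have "((\<lambda>a. LINT y:{a<..}|lborel. f y * y) has_real_derivative - (c / s * f (c / s))) (at (c / s))"
    using has_real_derivative_set_integral_Ioi[OF fy_int fy_cont open_greaterThan a] by (simp add: mult.commute)
  moreover have "((\<lambda>a. LINT y:{a<..}|lborel. f y) has_real_derivative - f (c / s)) (at (c / s))"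
    by (rule has_real_derivative_set_integral_Ioi[OF f_int f_cont open_greaterThan a])
  ultimately have "((\<lambda>x. x * (LINT y:{c / x<..}|lborel. f y * y) - c * (LINT y:{c / x<..}|lborel. f y))
      has_real_derivative (LINT y:{c / s<..}|lborel. f y * y)) (at s)"
    using s by (intro has_real_derivative_call_price_shape) auto
  then show ?thesis
    unfolding price_call_eq_upper_tails[OF D f pos, abs_def] integral_Q1'_Phi[OF D f pos] c_def .
qed

end
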